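(* Let $(a_1,a_2)\in C$ and let $X$ be the AR(2)-process with coefficients $a_1,a_2$. Assume that $\mathbb{P}(Y_1<0)>0$ and that $\mathbb{P}(Y_1\ge x)\precsim(\log x)^{-\alpha}$ as $x\to\infty$ for some $\alpha>1$. Then for every $x\ge0$, $$\mathbb{P}\Big(\sup_{n\ge1}X_n\le x\Big)=\lim_{N\to\infty}p_N(x)>0 .$$
   Context: Let $(Y_n)_{n\ge1}$ be i.i.d. nondegenerate real random variables. The AR(2)-process is $X_n=a_1X_{n-1}+a_2X_{n-2}+Y_n$ for $n\ge1$ with $X_n=0$ for $n\le0$; $p_N(x):=\mathbb{P}(\sup_{n=1,\dots,N}X_n\le x)$. The region $C:=\{a_1\ge2,\ a_1^2+4a_2>0\}\cup\{a_1\in(0,2),\ a_1+a_2>1\}\cup\{a_1^2+4a_2=0,\ a_1>2\}\cup\{a_1=0,\ a_2>1\}$. $f\precsim g$ means $\limsup f/g<\infty$. *)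

theory Defs
  imports "HOL-Probability.Probability" "HOL-Library.Landau_Symbols"
begin

text \<open>AR(2) process X_n = a1 X_{n-1} + a2 X_{n-2} + Y_n (n >= 1), X_n = 0 for n <= 0.
  Indices n <= 0 are all represented by index 0 (X 0 = 0, and X_{-1} = 0 gives X 1 = Y 1).
  The innovation Y 0 is never used.\<close>
fun AR2 :: "real \<Rightarrow> real \<Rightarrow> (nat \<Rightarrow> 'a \<Rightarrow> real) \<Rightarrow> nat \<Rightarrow> 'a \<Rightarrow> real" where
  "AR2 a1 a2 Y 0 w = 0"
| "AR2 a1 a2 Y (Suc 0) w = Y 1 w"
| "AR2 a1 a2 Y (Suc (Suc n)) w =
     a1 * AR2 a1 a2 Y (Suc n) w + a2 * AR2 a1 a2 Y n w + Y (Suc (Suc n)) w"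

definition pN :: "'a measure \<Rightarrow> real \<Rightarrow> real \<Rightarrow> (nat \<Rightarrow> 'a \<Rightarrow> real) \<Rightarrow> nat \<Rightarrow> real \<Rightarrow> real" where
  "pN M a1 a2 Y N x = measure M {w \<in> space M. \<forall>n\<in>{1..N}. AR2 a1 a2 Y n w \<le> x}"

definition regionC :: "(real \<times> real) set" where
  "regionC =
     {(a1, a2). a1 \<ge> 2 \<and> a1\<^sup>2 + 4 * a2 > 0}
   \<union> {(a1, a2). 0 < a1 \<and> a1 < 2 \<and> a1 + a2 > 1}
   \<union> {(a1, a2). a1\<^sup>2 + 4 * a2 = 0 \<and> a1 > 2}
   \<union> {(a1, a2). a1 = 0 \<and> a2 > 1}"

end

theory Submission
  imports Defs
begin

(* For (a1,a2) in C the characteristic polynomial z^2 - a1 z - a2 has real roots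
   r1 > 1 and r2 >= -r1.  Then X_n = sum_{k=1..n} h(n-k) Y_k, where the impulse response
   h(m) = sum_{i<=m} r1^i r2^(m-i) is nonnegative and r1^k h(n-k) <= r1^2 (h(n-1) + h(n-2)).
   Fix e > 0 with P(Y_1 <= -e) > 0, put s = sqrt r1 and consider the barrier event
       E_K = {Y_k <= -e for 1 <= k < K,  Y_k <= s^k for k >= K}.
   On E_K the innovations Y_{n-1}, Y_n contribute at most -e (h(n-1) + h(n-2)), which dominates
   the contribution of the large innovations once sum_{k>=K} (s/r1)^k <= e/r1^2; so X_n <= 0.
   By independence P(E_K) >= P(Y_1 <= -e)^(K-1) (1 - sum_{k>=K} P(Y_1 >= s^k)), and the
   logarithmic tail assumption makes the last series summable, so P(E_K) > 0 for large K.  The theorem follows from it, together with continuity of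
   measure from above for the limit of p_N(x). *)

section \<open>The impulse response of a second-order recursion\<close>

text \<open>\<open>ar2_kernel r1 r2 m = (\<Sum>i\<le>m. r1^i * r2^(m-i))\<close>, defined by a recursion that peels off
  the term \<open>r1^m\<close>; it is the response of the recursion with characteristic roots \<open>r1, r2\<close>.\<close>
fun ar2_kernel :: "real \<Rightarrow> real \<Rightarrow> nat \<Rightarrow> real" where
  "ar2_kernel r1 r2 0 = 1"
| "ar2_kernel r1 r2 (Suc m) = r1 ^ Suc m + r2 * ar2_kernel r1 r2 m"

text \<open>The kernel is symmetric in the roots, so the other root can be peeled off as well.\<close>
lemma ar2_kernel_Suc_swap:
  "ar2_kernel r1 r2 (Suc m) = r2 ^ Suc m + r1 * ar2_kernel r1 r2 m"
proof (induction m)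
  case (Suc m)
  have "ar2_kernel r1 r2 (Suc (Suc m)) = r1 ^ Suc (Suc m) + r2 * ar2_kernel r1 r2 (Suc m)"
    by simp
  also have "\<dots> = r1 ^ Suc (Suc m) + r2 * (r2 ^ Suc m + r1 * ar2_kernel r1 r2 m)"
    using Suc by simp
  also have "\<dots> = r2 ^ Suc (Suc m) + r1 * (r1 ^ Suc m + r2 * ar2_kernel r1 r2 m)"
    by (simp add: algebra_simps)
  finally show ?case by simp
qed simp

lemma ar2_kernel_rec:
  "ar2_kernel r1 r2 (Suc (Suc m)) = (r1 + r2) * ar2_kernel r1 r2 (Suc m) - r1 * r2 * ar2_kernel r1 r2 m"
  by (simp add: algebra_simps)

lemma ar2_kernel_bounds_nonpos:
  assumes "r2 \<le> 0" "-r1 \<le> r2"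
  shows "0 \<le> ar2_kernel r1 r2 m \<and> ar2_kernel r1 r2 m \<le> r1 ^ m"
proof (induction m)
  case (Suc m)
  have "r2 * ar2_kernel r1 r2 m \<le> 0" using Suc assms by (simp add: mult_nonpos_nonneg)
  moreover have "-r1 * ar2_kernel r1 r2 m \<le> r2 * ar2_kernel r1 r2 m"
    using Suc assms by (intro mult_right_mono) auto
  moreover have "r1 * ar2_kernel r1 r2 m \<le> r1 * r1 ^ m"
    using Suc assms by (intro mult_left_mono) auto
  ultimately show ?case by simp
qed simp

lemma ar2_kernel_nonneg:
  assumes "-r1 \<le> r2" "0 \<le> r1"
  shows "0 \<le> ar2_kernel r1 r2 m"
proof (cases "r2 \<le> 0")
  case True
  then show ?thesis using ar2_kernel_bounds_nonpos[OF True assms(1)] by simp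
next
  case False
  then show ?thesis using assms by (induction m) auto
qed

lemma ar2_kernel_shift_ge:
  assumes "0 \<le> r2" "0 \<le> r1"
  shows "r1 ^ j * ar2_kernel r1 r2 m \<le> ar2_kernel r1 r2 (m + j)"
proof (induction j)
  case (Suc j)
  have "r1 ^ Suc j * ar2_kernel r1 r2 m = r1 * (r1 ^ j * ar2_kernel r1 r2 m)" by simp
  also have "\<dots> \<le> r1 * ar2_kernel r1 r2 (m + j)"
    using Suc assms by (intro mult_left_mono) auto
  also have "\<dots> \<le> ar2_kernel r1 r2 (m + Suc j)"
    using assms ar2_kernel_nonneg[of r1 r2 "m + j"]
    by (simp add: ar2_kernel_Suc_swap del: ar2_kernel.simps)
  finally show ?case .
qed simp

lemma ar2_kernel_pair_ge_nonpos:
  assumes "1 \<le> r1" "r2 \<le> 0" "-r1 \<le> r2"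
  shows "r1 ^ m \<le> ar2_kernel r1 r2 (Suc m) + ar2_kernel r1 r2 m"
proof -
  have h: "0 \<le> ar2_kernel r1 r2 m" "ar2_kernel r1 r2 m \<le> r1 ^ m"
    using ar2_kernel_bounds_nonpos[OF assms(2,3)] by auto
  have "-r1 * ar2_kernel r1 r2 m \<le> r2 * ar2_kernel r1 r2 m"
    using h assms by (intro mult_right_mono) auto
  moreover have "(r1 - 1) * ar2_kernel r1 r2 m \<le> (r1 - 1) * r1 ^ m"
    using h assms by (intro mult_left_mono) auto
  ultimately show ?thesis by (simp add: algebra_simps)
qed

lemma ar2_kernel_weight_le:
  assumes "1 \<le> r1" "-r1 \<le> r2" "2 \<le> k" "k \<le> n"
  shows "r1 ^ k * ar2_kernel r1 r2 (n - k)
           \<le> r1\<^sup>2 * (ar2_kernel r1 r2 (n - 1) + ar2_kernel r1 r2 (n - 2))"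
proof (cases "0 \<le> r2")
  case True
  have nn: "0 \<le> ar2_kernel r1 r2 m" for m using ar2_kernel_nonneg assms by simp
  have "r1 ^ (k - 1) * ar2_kernel r1 r2 (n - k) \<le> ar2_kernel r1 r2 (n - k + (k - 1))"
    using True assms by (intro ar2_kernel_shift_ge) auto
  also have "n - k + (k - 1) = n - 1" using assms by simp
  finally have shift: "r1 ^ (k - 1) * ar2_kernel r1 r2 (n - k) \<le> ar2_kernel r1 r2 (n - 1)" .
  have "r1 ^ k * ar2_kernel r1 r2 (n - k) = r1 * (r1 ^ (k - 1) * ar2_kernel r1 r2 (n - k))"
    using assms by (cases k) auto
  also have "\<dots> \<le> r1 * ar2_kernel r1 r2 (n - 1)"
    using shift assms by (intro mult_left_mono) auto
  also have "r1 * ar2_kernel r1 r2 (n - 1) \<le> r1\<^sup>2 * ar2_kernel r1 r2 (n - 1)"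
    using assms nn by (intro mult_right_mono) (auto simp: power2_eq_square)
  also have "\<dots> \<le> r1\<^sup>2 * (ar2_kernel r1 r2 (n - 1) + ar2_kernel r1 r2 (n - 2))"
    using nn by (intro mult_left_mono) auto
  finally show ?thesis .
next
  case False
  then have r2: "r2 \<le> 0" by simp
  have n: "n - 1 = Suc (n - 2)" using assms by arith
  have "r1 ^ k * ar2_kernel r1 r2 (n - k) \<le> r1 ^ k * r1 ^ (n - k)"
    using ar2_kernel_bounds_nonpos[OF r2 assms(2)] assms by (intro mult_left_mono) auto
  also have "\<dots> = r1 ^ n" using assms by (simp flip: power_add)
  also have "\<dots> = r1\<^sup>2 * r1 ^ (n - 2)" using assms by (metis le_add_diff_inverse le_trans power_add)
  also have "\<dots> \<le> r1\<^sup>2 * (ar2_kernel r1 r2 (n - 1) + ar2_kernel r1 r2 (n - 2))"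
    unfolding n using ar2_kernel_pair_ge_nonpos[OF assms(1) r2 assms(2)]
    by (intro mult_left_mono) auto
  finally show ?thesis .
qed

section \<open>Moving-average form and characteristic roots\<close>

lemma AR2_moving_average:
  assumes "a1 = r1 + r2" "a2 = -(r1 * r2)"
  shows "AR2 a1 a2 Y n w = (\<Sum>k\<in>{1..n}. ar2_kernel r1 r2 (n - k) * Y k w)"
proof (induction n rule: induct_nat_012)
  case (ge2 p)
  let ?h = "ar2_kernel r1 r2"
  have kernel: "?h (Suc (Suc p) - k) = (r1 + r2) * ?h (Suc p - k) - r1 * r2 * ?h (p - k)"
    if "k \<le> p" for k
    using that ar2_kernel_rec[of r1 r2 "p - k"] by (simp add: Suc_diff_le)
  have "(\<Sum>k\<in>{1..p}. ?h (Suc (Suc p) - k) * Y k w)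
      = (\<Sum>k\<in>{1..p}. a1 * (?h (Suc p - k) * Y k w) + a2 * (?h (p - k) * Y k w))"
    by (rule sum.cong[OF refl]) (simp add: kernel assms algebra_simps del: ar2_kernel.simps)
  also have "\<dots> = a1 * (\<Sum>k\<in>{1..p}. ?h (Suc p - k) * Y k w) + a2 * (\<Sum>k\<in>{1..p}. ?h (p - k) * Y k w)"
    by (simp add: sum.distrib sum_distrib_left)
  finally have split: "(\<Sum>k\<in>{1..p}. ?h (Suc (Suc p) - k) * Y k w)
      = a1 * (\<Sum>k\<in>{1..p}. ?h (Suc p - k) * Y k w) + a2 * (\<Sum>k\<in>{1..p}. ?h (p - k) * Y k w)" .
  have "?h 0 = 1" "?h (Suc 0) = a1" using assms by simp_all
  with ge2 split show ?case by (simp add: sum.cl_ivl_Suc algebra_simps del: ar2_kernel.simps)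
qed simp_all

lemma regionC_roots:
  assumes "(a1, a2) \<in> regionC"
  obtains r1 r2 where "1 < r1" "-r1 \<le> r2" "r2 \<le> r1" "a1 = r1 + r2" "a2 = -(r1 * r2)"
proof -
  define D where "D = a1\<^sup>2 + 4 * a2"
  \<comment> \<open>in each of the four parts of \<open>C\<close> the larger root \<open>(a1 + sqrt D)/2\<close> exceeds 1\<close>
  have large_root: "0 \<le> D \<and> 0 \<le> a1 \<and> 2 < a1 + sqrt D" if "(2 - a1)\<^sup>2 < D" "0 \<le> a1"
  proof -
    have "2 - a1 < sqrt D" using that real_less_rsqrt by blast
    moreover have "0 \<le> D" using that(1) by (smt (verit) zero_le_power2)
    ultimately show ?thesis using that by linarith
  qed
  have key: "0 \<le> D \<and> 0 \<le> a1 \<and> 2 < a1 + sqrt D"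
  proof (cases "a1 < 2")
    case True
    then have "0 \<le> a1" "1 < a1 + a2 \<or> (a1 = 0 \<and> 1 < a2)"
      using assms unfolding regionC_def by auto
    then have "(2 - a1)\<^sup>2 < D" unfolding D_def by (auto simp: power2_eq_square algebra_simps)
    then show ?thesis using \<open>0 \<le> a1\<close> by (rule large_root)
  next
    case False
    then have "0 < D \<or> (D = 0 \<and> 2 < a1)" using assms unfolding regionC_def D_def by auto
    then show ?thesis
    proof (elim disjE)
      assume "0 < D"
      then have "0 < sqrt D" by simp
      with False \<open>0 < D\<close> show ?thesis by (intro conjI) linarith+
    qed simp
  qed
  define r1 where "r1 = (a1 + sqrt D) / 2"
  define r2 where "r2 = (a1 - sqrt D) / 2"
  have "sqrt D * sqrt D = D" "0 \<le> sqrt D" using key by simp_all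
  then have "1 < r1" "-r1 \<le> r2" "r2 \<le> r1" "a1 = r1 + r2" "a2 = -(r1 * r2)"
    using key unfolding r1_def r2_def D_def by (simp_all add: field_simps power2_eq_square)
  then show thesis by (rule that)
qed

section \<open>The deterministic barrier bound\<close>

definition barrier :: "real \<Rightarrow> real \<Rightarrow> nat \<Rightarrow> nat \<Rightarrow> real" where
  "barrier e s K k = (if k < K then -e else s ^ k)"

lemma ar2_kernel_geometric_weights_le:
  assumes "1 \<le> r1" "-r1 \<le> r2" "2 \<le> K" "0 \<le> s"
  shows "(\<Sum>k\<in>{K..n}. ar2_kernel r1 r2 (n - k) * s ^ k)
           \<le> r1\<^sup>2 * (ar2_kernel r1 r2 (n - 1) + ar2_kernel r1 r2 (n - 2)) * (\<Sum>k\<in>{K..n}. (s / r1) ^ k)"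
proof -
  let ?H = "ar2_kernel r1 r2 (n - 1) + ar2_kernel r1 r2 (n - 2)"
  have "ar2_kernel r1 r2 (n - k) * s ^ k \<le> r1\<^sup>2 * ?H * (s / r1) ^ k" if "k \<in> {K..n}" for k
  proof -
    have "ar2_kernel r1 r2 (n - k) * s ^ k = (r1 ^ k * ar2_kernel r1 r2 (n - k)) * (s / r1) ^ k"
      using assms by (simp add: power_divide)
    also have "\<dots> \<le> r1\<^sup>2 * ?H * (s / r1) ^ k"
      using ar2_kernel_weight_le[of r1 r2 k n] that assms by (intro mult_right_mono) auto
    finally show ?thesis .
  qed
  then have "(\<Sum>k\<in>{K..n}. ar2_kernel r1 r2 (n - k) * s ^ k) \<le> (\<Sum>k\<in>{K..n}. r1\<^sup>2 * ?H * (s / r1) ^ k)"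
    by (rule sum_mono)
  then show ?thesis by (simp add: sum_distrib_left)
qed

text \<open>If the innovations stay below the barrier and the geometric tail \<open>\<Sum>k\<ge>K. (s/r1)^k\<close> is at
  most \<open>e/r1\<^sup>2\<close>, the process never becomes positive: the last two (negative) innovations outweigh
  all large ones.\<close>
lemma AR2_nonpos_below_barrier:
  assumes r: "1 < r1" "-r1 \<le> r2" "a1 = r1 + r2" "a2 = -(r1 * r2)"
    and e: "0 < e" and K: "3 \<le> K" and s: "0 < s"
    and geo: "\<And>n. (\<Sum>k\<in>{K..n}. (s / r1) ^ k) \<le> e / r1\<^sup>2"
    and Yb: "\<And>k. 1 \<le> k \<Longrightarrow> Y k w \<le> barrier e s K k"
    and n: "1 \<le> n"
  shows "AR2 a1 a2 Y n w \<le> 0"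
proof (cases "n = 1")
  case True
  then show ?thesis using Yb[of 1] K e by (simp add: barrier_def)
next
  case False
  then have n2: "2 \<le> n" using n by simp
  define h where "h = ar2_kernel r1 r2"
  define H where "H = h (n - 1) + h (n - 2)"
  have hnn: "0 \<le> h m" for m unfolding h_def using r by (intro ar2_kernel_nonneg) auto
  define low where "low k = (if k \<le> 2 then -e else 0)" for k :: nat
  define high where "high k = (if K \<le> k then s ^ k else 0)" for k :: nat
  have Y_split: "Y k w \<le> low k + high k" if "1 \<le> k" for k
    using Yb[OF that] K e unfolding low_def high_def barrier_def by auto
  have "AR2 a1 a2 Y n w = (\<Sum>k\<in>{1..n}. h (n - k) * Y k w)"
    unfolding h_def by (rule AR2_moving_average[OF r(3,4)])
  also have "\<dots> \<le> (\<Sum>k\<in>{1..n}. h (n - k) * (low k + high k))"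
    using Y_split hnn by (intro sum_mono mult_left_mono) auto
  also have "\<dots> = (\<Sum>k\<in>{1..n}. h (n - k) * low k) + (\<Sum>k\<in>{1..n}. h (n - k) * high k)"
    by (simp add: distrib_left sum.distrib)
  also have "(\<Sum>k\<in>{1..n}. h (n - k) * low k) = (\<Sum>k\<in>{1..2}. h (n - k) * low k)"
    by (rule sum.mono_neutral_right) (use n2 in \<open>auto simp: low_def\<close>)
  also have "(\<Sum>k\<in>{1..2}. h (n - k) * low k) = - e * H"
    unfolding H_def low_def by (simp add: numeral_2_eq_2 algebra_simps)
  also have "(\<Sum>k\<in>{1..n}. h (n - k) * high k) = (\<Sum>k\<in>{K..n}. h (n - k) * s ^ k)"
    by (rule sum.mono_neutral_cong_right) (use K in \<open>auto simp: high_def\<close>)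
  also have "\<dots> \<le> r1\<^sup>2 * H * (\<Sum>k\<in>{K..n}. (s / r1) ^ k)"
    unfolding h_def H_def using r K s by (intro ar2_kernel_geometric_weights_le) auto
  also have "\<dots> \<le> r1\<^sup>2 * H * (e / r1\<^sup>2)"
    using geo[of n] hnn unfolding H_def by (intro mult_left_mono) auto
  also have "\<dots> = e * H" using r by simp
  finally show ?thesis by simp
qed

section \<open>Series and products\<close>

lemma summable_tail_sums_small:
  fixes g :: "nat \<Rightarrow> real"
  assumes "summable g" "\<And>k. 0 \<le> g k" "0 < \<epsilon>"
  shows "\<forall>\<^sub>F K in sequentially. \<forall>n. (\<Sum>k\<in>{K..n}. g k) \<le> \<epsilon>"
proof -
  obtain N where N: "\<And>K. K \<ge> N \<Longrightarrow> norm (\<Sum>i. g (i + K)) < \<epsilon>"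
    using suminf_exist_split[OF assms(3,1)] by blast
  have tail_le: "(\<Sum>k\<in>{K..n}. g k) \<le> (\<Sum>i. g (i + K))" for K n
  proof (cases "K \<le> n")
    case True
    have "(\<Sum>k\<in>{K..n}. g k) = (\<Sum>i\<in>{0..n - K}. g (i + K))"
      using sum.shift_bounds_cl_nat_ivl[of g 0 K "n - K"] True by simp
    also have "\<dots> \<le> (\<Sum>i. g (i + K))"
      using assms by (intro sum_le_suminf) (auto simp: summable_iff_shift)
    finally show ?thesis .
  qed (use assms in \<open>simp add: suminf_nonneg summable_iff_shift\<close>)
  have "(\<Sum>k\<in>{K..n}. g k) \<le> \<epsilon>" if "K \<ge> N" for K n
  proof -
    have "(\<Sum>k\<in>{K..n}. g k) \<le> norm (\<Sum>i. g (i + K))" using tail_le[of K n] by simp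
    then show ?thesis using N[OF that] by simp
  qed
  then show ?thesis by (intro eventually_sequentiallyI[of N]) auto
qed

text \<open>A logarithmic tail bound \<open>f x = O((ln x)^(-\<alpha>))\<close> with \<open>\<alpha> > 1\<close> is summable along any geometric
  sequence \<open>s^k\<close>, \<open>s > 1\<close>, because \<open>(ln s^k)^(-\<alpha>) = (k ln s)^(-\<alpha>)\<close>.\<close>
lemma summable_at_geometric_if_log_tail:
  fixes f :: "real \<Rightarrow> real"
  assumes "f \<in> O[at_top](\<lambda>x. ln x powr (-\<alpha>))" "1 < \<alpha>" "1 < s"
  shows "summable (\<lambda>k. f (s ^ k))"
proof -
  obtain c where "eventually (\<lambda>x. norm (f x) \<le> c * norm (ln x powr -\<alpha>)) at_top"
    using assms(1) by (elim landau_o.bigE)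
  then obtain x0 where x0: "\<And>x. x \<ge> x0 \<Longrightarrow> norm (f x) \<le> c * norm (ln x powr -\<alpha>)"
    by (auto simp: eventually_at_top_linorder)
  have "filterlim (\<lambda>k. norm (s ^ k)) at_top sequentially"
    using assms(3)
    by (intro filterlim_at_infinity_imp_norm_at_top filterlim_realpow_sequentially_gt1) simp
  then have "eventually (\<lambda>k. x0 \<le> s ^ k) sequentially"
    using assms(3) by (simp add: filterlim_at_top)
  then have "eventually (\<lambda>k. x0 \<le> s ^ k \<and> 1 \<le> k) sequentially"
    by (simp add: eventually_ge_at_top eventually_conj)
  then have "eventually (\<lambda>k. norm (f (s ^ k)) \<le> c * ln s powr -\<alpha> * real k powr -\<alpha>) sequentially"
  proof eventually_elim
    case (elim k)
    have "ln (s ^ k) powr -\<alpha> = real k powr -\<alpha> * ln s powr -\<alpha>"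
      using assms by (simp add: ln_realpow powr_mult)
    then show ?case using x0[of "s ^ k"] elim by (simp add: algebra_simps)
  qed
  moreover have "summable (\<lambda>k. c * ln s powr -\<alpha> * real k powr -\<alpha>)"
    using summable_real_powr_iff[of "-\<alpha>"] assms by (intro summable_mult) simp
  ultimately show ?thesis by (rule summable_comparison_test_ev)
qed

lemma prod_ge_one_minus_sum:
  fixes u :: "'b \<Rightarrow> real"
  assumes "finite S" "\<And>k. k \<in> S \<Longrightarrow> 0 \<le> u k \<and> u k \<le> 1"
  shows "1 - (\<Sum>k\<in>S. 1 - u k) \<le> (\<Prod>k\<in>S. u k)"
  using assms
proof (induction S rule: finite_induct)
  case (insert x F)
  have IH: "1 - (\<Sum>k\<in>F. 1 - u k) \<le> (\<Prod>k\<in>F. u k)" and ux: "0 \<le> u x" "u x \<le> 1"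
    using insert by auto
  have "0 \<le> (\<Sum>k\<in>F. 1 - u k)" using insert by (intro sum_nonneg) auto
  then have "1 - ((1 - u x) + (\<Sum>k\<in>F. 1 - u k)) \<le> u x * (1 - (\<Sum>k\<in>F. 1 - u k))"
    using ux by (simp add: algebra_simps mult_left_le_one_le)
  also have "\<dots> \<le> u x * (\<Prod>k\<in>F. u k)" using IH ux by (intro mult_left_mono) auto
  finally show ?case using insert by simp
qed simp

section \<open>Probability of barrier events\<close>

context prob_space
begin

lemma prob_forall_ge1_limit:
  assumes "\<And>n. 1 \<le> n \<Longrightarrow> {w \<in> space M. P n w} \<in> events"
  shows "(\<lambda>N. prob {w \<in> space M. \<forall>n\<in>{1..N}. P n w}) \<longlonglongrightarrow> prob {w \<in> space M. \<forall>n\<ge>1. P n w}"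
proof -
  define B where "B N = {w \<in> space M. \<forall>n\<in>{1..N}. P n w}" for N
  have "B N = space M \<inter> (\<Inter>n\<in>{1..N}. {w \<in> space M. P n w})" for N
    unfolding B_def by auto
  then have "B N \<in> events" for N using assms by (cases "N = 0") auto
  moreover have "decseq B" unfolding B_def decseq_def by auto
  ultimately have "(\<lambda>N. prob (B N)) \<longlonglongrightarrow> prob (\<Inter>N. B N)"
    by (intro finite_Lim_measure_decseq) auto
  moreover have "(\<Inter>N. B N) = {w \<in> space M. \<forall>n\<ge>1. P n w}"
  proof (intro equalityI subsetI)
    fix w assume "w \<in> (\<Inter>N. B N)"
    then have "w \<in> B n" for n by blast
    then show "w \<in> {w \<in> space M. \<forall>n\<ge>1. P n w}" unfolding B_def by fastforce
  qed (auto simp: B_def)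
  ultimately show ?thesis unfolding B_def by simp
qed

lemma prob_below_neg_level:
  fixes X :: "'a \<Rightarrow> real"
  assumes [measurable]: "X \<in> borel_measurable M" and "prob {w \<in> space M. X w < 0} > 0"
  obtains e where "0 < e" "prob {w \<in> space M. X w \<le> -e} > 0"
proof -
  define A where "A i = {w \<in> space M. X w \<le> -1 / real (Suc i)}" for i
  have level_mono: "-1 / real (Suc i) \<le> -1 / real (Suc j)" if "i \<le> j" for i j
    using that by (simp add: divide_simps)
  have "A i \<subseteq> A j" if "i \<le> j" for i j
  proof
    fix w assume "w \<in> A i"
    then have "w \<in> space M" "X w \<le> -1 / real (Suc i)" unfolding A_def by blast+
    moreover have "X w \<le> -1 / real (Suc j)" using calculation(2) level_mono[OF that] by linarith
    ultimately show "w \<in> A j" unfolding A_def by blast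
  qed
  then have "incseq A" by (rule monoI)
  moreover have "range A \<subseteq> events" unfolding A_def by auto
  ultimately have "(\<lambda>i. prob (A i)) \<longlonglongrightarrow> prob (\<Union>i. A i)"
    by (intro finite_Lim_measure_incseq)
  moreover have "(\<Union>i. A i) = {w \<in> space M. X w < 0}"
  proof (intro equalityI subsetI)
    fix w assume "w \<in> {w \<in> space M. X w < 0}"
    then obtain i where i: "inverse (real (Suc i)) < - X w" and w: "w \<in> space M"
      using reals_Archimedean[of "- X w"] by auto
    from i have "X w \<le> -1 / real (Suc i)" by (simp add: divide_inverse)
    with w show "w \<in> (\<Union>i. A i)" unfolding A_def by blast
  next
    fix w assume "w \<in> (\<Union>i. A i)"
    then obtain i where w: "w \<in> space M" and le: "X w \<le> -1 / real (Suc i)"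
      unfolding A_def by blast
    have "-1 / real (Suc i) < 0" by simp
    with le have "X w < 0" by linarith
    with w show "w \<in> {w \<in> space M. X w < 0}" by simp
  qed
  ultimately have "(\<lambda>i. prob (A i)) \<longlonglongrightarrow> prob {w \<in> space M. X w < 0}" by simp
  from order_tendstoD(1)[OF this assms(2)] obtain i where "prob (A i) > 0"
    using eventually_happens'[OF sequentially_bot] by blast
  then show thesis by (intro that[of "1 / real (Suc i)"]) (auto simp: A_def)
qed

lemma indep_prob_below_levels:
  fixes Y :: "nat \<Rightarrow> 'a \<Rightarrow> real"
  assumes "indep_vars (\<lambda>_. borel) Y {1..}"
  shows "prob {w \<in> space M. \<forall>k\<in>{1..m}. Y k w \<le> c k}
           = (\<Prod>k\<in>{1..m}. prob {w \<in> space M. Y k w \<le> c k})"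
proof (cases "m = 0")
  case False
  define F where "F i = {Y i -` S \<inter> space M | S. S \<in> sets borel}" for i
  define A where "A k = {w \<in> space M. Y k w \<le> c k}" for k
  have "indep_sets F {1..}"
    using assms unfolding indep_vars_def2 F_def by simp
  then have indep_finite: "\<forall>J\<subseteq>{1..}. J \<noteq> {} \<longrightarrow> finite J \<longrightarrow>
      (\<forall>A\<in>Pi J F. prob (\<Inter>j\<in>J. A j) = (\<Prod>j\<in>J. prob (A j)))"
    unfolding indep_sets_def by (elim conjE)
  have "A \<in> Pi {1..m} F"
  proof (rule Pi_I)
    fix k
    have "A k = Y k -` {..c k} \<inter> space M" unfolding A_def by auto
    moreover have "{..c k} \<in> sets borel" by simp
    ultimately show "A k \<in> F k" unfolding F_def by blast
  qed
  moreover have "{1..m} \<subseteq> {1..}" "{1..m} \<noteq> {}" using False by auto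
  ultimately have "prob (\<Inter>k\<in>{1..m}. A k) = (\<Prod>k\<in>{1..m}. prob (A k))"
    using indep_finite by (meson finite_atLeastAtMost)
  moreover have "(\<Inter>k\<in>{1..m}. A k) = {w \<in> space M. \<forall>k\<in>{1..m}. Y k w \<le> c k}"
    using \<open>{1..m} \<noteq> {}\<close> unfolding A_def by blast
  ultimately show ?thesis unfolding A_def by simp
qed (simp add: prob_space)

lemma identically_distributed_prob_le:
  fixes X Z :: "'a \<Rightarrow> real"
  assumes "X \<in> borel_measurable M" "Z \<in> borel_measurable M" "distr M borel X = distr M borel Z"
  shows "prob {w \<in> space M. X w \<le> t} = prob {w \<in> space M. Z w \<le> t}"
  using measure_distr[OF assms(1), of "{..t}"] measure_distr[OF assms(2), of "{..t}"] assms(3)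
  by (simp add: vimage_def Int_def conj_commute)

text \<open>Lower bound for barrier events of i.i.d. innovations: by independence the barrier is
  respected with probability \<open>P(Y_1 \<le> -e)^(K-1)\<close> during the first phase and, by the Weierstrass
  product inequality, with probability at least \<open>1/2\<close> afterwards, provided the exceedance
  probabilities \<open>P(Y_1 \<ge> s^k)\<close>, \<open>k \<ge> K\<close>, sum to at most \<open>1/2\<close>.\<close>
lemma iid_barrier_prob_ge:
  fixes Y :: "nat \<Rightarrow> 'a \<Rightarrow> real"
  assumes indep: "indep_vars (\<lambda>_. borel) Y {1..}"
    and ident: "\<And>n. n \<ge> 1 \<Longrightarrow> distr M borel (Y n) = distr M borel (Y 1)"
    and K: "1 \<le> K"
    and small: "\<And>n. (\<Sum>k\<in>{K..n}. prob {w \<in> space M. Y 1 w \<ge> s ^ k}) \<le> 1/2"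
  shows "prob {w \<in> space M. Y 1 w \<le> -e} ^ (K - 1) * (1/2)
           \<le> prob {w \<in> space M. \<forall>k\<ge>1. Y k w \<le> barrier e s K k}"
proof -
  have rv[measurable]: "Y k \<in> borel_measurable M" if "1 \<le> k" for k
    using indep that unfolding indep_vars_def2 by auto
  have ident_prob: "prob {w \<in> space M. Y k w \<le> t} = prob {w \<in> space M. Y 1 w \<le> t}"
    if "1 \<le> k" for k t
    using rv[OF that] rv[of 1] ident[OF that] by (intro identically_distributed_prob_le) auto
  define p0 where "p0 = prob {w \<in> space M. Y 1 w \<le> -e}"
  let ?P = "\<lambda>k. prob {w \<in> space M. Y k w \<le> barrier e s K k}"
  let ?B = "\<lambda>m. prob {w \<in> space M. \<forall>k\<in>{1..m}. Y k w \<le> barrier e s K k}"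
  have violate: "1 - ?P k \<le> prob {w \<in> space M. Y 1 w \<ge> s ^ k}" if "K \<le> k" for k
  proof -
    have "1 - prob {w \<in> space M. Y 1 w \<le> s ^ k} = prob (space M - {w \<in> space M. Y 1 w \<le> s ^ k})"
      by (rule prob_compl[symmetric]) measurable
    also have "\<dots> \<le> prob {w \<in> space M. Y 1 w \<ge> s ^ k}" by (rule finite_measure_mono) auto
    finally show ?thesis using ident_prob[of k "s ^ k"] that K by (simp add: barrier_def)
  qed
  have "p0 ^ (K - 1) * (1/2) \<le> ?B m" if "K \<le> m" for m
  proof -
    have "(\<Sum>k\<in>{K..m}. 1 - ?P k) \<le> (\<Sum>k\<in>{K..m}. prob {w \<in> space M. Y 1 w \<ge> s ^ k})"
      by (intro sum_mono violate) auto
    then have "1/2 \<le> 1 - (\<Sum>k\<in>{K..m}. 1 - ?P k)" using small[of m] by linarith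
    also have "\<dots> \<le> (\<Prod>k\<in>{K..m}. ?P k)" by (rule prod_ge_one_minus_sum) auto
    finally have late: "1/2 \<le> (\<Prod>k\<in>{K..m}. ?P k)" .
    have "?P k = p0" if "k \<in> {1..<K}" for k
      using that ident_prob[of k "-e"] by (simp add: barrier_def p0_def)
    then have early: "(\<Prod>k\<in>{1..<K}. ?P k) = p0 ^ (K - 1)" by simp
    have "p0 ^ (K - 1) * (1/2) \<le> (\<Prod>k\<in>{1..<K}. ?P k) * (\<Prod>k\<in>{K..m}. ?P k)"
      unfolding early using late by (intro mult_left_mono) (auto simp: p0_def)
    also have "\<dots> = (\<Prod>k\<in>{1..m}. ?P k)"
      using that K by (subst prod.union_disjoint[symmetric]) (auto intro: prod.cong)
    also have "\<dots> = ?B m" by (rule indep_prob_below_levels[OF indep, symmetric])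
    finally show ?thesis .
  qed
  moreover have "?B \<longlonglongrightarrow> prob {w \<in> space M. \<forall>k\<ge>1. Y k w \<le> barrier e s K k}"
    by (intro prob_forall_ge1_limit) measurable
  ultimately show ?thesis unfolding p0_def by (intro LIMSEQ_le_const) auto
qed

lemma iid_barrier_prob_pos:
  fixes Y :: "nat \<Rightarrow> 'a \<Rightarrow> real"
  assumes indep: "indep_vars (\<lambda>_. borel) Y {1..}"
    and ident: "\<And>n. n \<ge> 1 \<Longrightarrow> distr M borel (Y n) = distr M borel (Y 1)"
    and low: "prob {w \<in> space M. Y 1 w \<le> -e} > 0"
    and tail: "summable (\<lambda>k. prob {w \<in> space M. Y 1 w \<ge> s ^ k})"
  shows "\<forall>\<^sub>F K in sequentially. prob {w \<in> space M. \<forall>k\<ge>1. Y k w \<le> barrier e s K k} > 0"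
proof -
  have "\<forall>\<^sub>F K in sequentially. (\<forall>n. (\<Sum>k\<in>{K..n}. prob {w \<in> space M. Y 1 w \<ge> s ^ k}) \<le> 1/2)"
    using tail by (intro summable_tail_sums_small) auto
  with eventually_ge_at_top[of 1] show ?thesis
  proof eventually_elim
    case (elim K)
    have "0 < prob {w \<in> space M. Y 1 w \<le> -e} ^ (K - 1) * (1/2)" using low by simp
    also have "\<dots> \<le> prob {w \<in> space M. \<forall>k\<ge>1. Y k w \<le> barrier e s K k}"
      using elim by (intro iid_barrier_prob_ge[OF indep ident]) auto
    finally show ?case .
  qed
qed

text \<open>Choose \<open>K\<close>
  so large that the barrier event has positive probability and the geometric tail condition of
  the lemma \<open>AR2_nonpos_below_barrier\<close> holds; the barrier event then implies the claim.\<close>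
lemma AR2_never_positive_prob_pos:
  fixes Y :: "nat \<Rightarrow> 'a \<Rightarrow> real"
  assumes indep: "indep_vars (\<lambda>_. borel) Y {1..}"
    and ident: "\<And>n. n \<ge> 1 \<Longrightarrow> distr M borel (Y n) = distr M borel (Y 1)"
    and r: "1 < r1" "-r1 \<le> r2" "a1 = r1 + r2" "a2 = -(r1 * r2)"
    and e: "0 < e" "prob {w \<in> space M. Y 1 w \<le> -e} > 0"
    and tail: "summable (\<lambda>k. prob {w \<in> space M. Y 1 w \<ge> sqrt r1 ^ k})"
  shows "prob {w \<in> space M. \<forall>n\<ge>1. AR2 a1 a2 Y n w \<le> 0} > 0"
proof -
  have [measurable]: "Y k \<in> borel_measurable M" if "1 \<le> k" for k
    using indep that unfolding indep_vars_def2 by auto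
  have [measurable]: "(\<lambda>w. AR2 a1 a2 Y n w) \<in> borel_measurable M" for n
    unfolding AR2_moving_average[OF r(3,4)] by measurable
  define s where "s = sqrt r1"
  have "1 < s" "s * s = r1" using r by (simp_all add: s_def)
  then have s: "0 < s" "s / r1 < 1" "0 < s / r1" by (auto simp: field_simps)
  have "summable (\<lambda>k. (s / r1) ^ k)" using s by (intro summable_geometric) simp
  then have geo: "\<forall>\<^sub>F K in sequentially. \<forall>n. (\<Sum>k\<in>{K..n}. (s / r1) ^ k) \<le> e / r1\<^sup>2"
    using s e r by (intro summable_tail_sums_small) auto
  have barrier_pos: "\<forall>\<^sub>F K in sequentially. prob {w \<in> space M. \<forall>k\<ge>1. Y k w \<le> barrier e s K k} > 0"
    using tail unfolding s_def by (intro iid_barrier_prob_pos[OF indep ident e(2)])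
  obtain K where K: "3 \<le> K" "\<And>n. (\<Sum>k\<in>{K..n}. (s / r1) ^ k) \<le> e / r1\<^sup>2"
    and pos: "prob {w \<in> space M. \<forall>k\<ge>1. Y k w \<le> barrier e s K k} > 0"
    using eventually_happens'[OF sequentially_bot
        eventually_conj[OF eventually_ge_at_top[of 3] eventually_conj[OF geo barrier_pos]]]
    by blast
  have "AR2 a1 a2 Y n w \<le> 0" if "\<forall>k\<ge>1. Y k w \<le> barrier e s K k" "1 \<le> n" for w n
    using that by (intro AR2_nonpos_below_barrier[OF r e(1) K(1) s(1) K(2)]) auto
  then have "{w \<in> space M. \<forall>k\<ge>1. Y k w \<le> barrier e s K k} \<subseteq> {w \<in> space M. \<forall>n\<ge>1. AR2 a1 a2 Y n w \<le> 0}"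
    by auto
  then have "prob {w \<in> space M. \<forall>k\<ge>1. Y k w \<le> barrier e s K k}
               \<le> prob {w \<in> space M. \<forall>n\<ge>1. AR2 a1 a2 Y n w \<le> 0}"
    by (rule finite_measure_mono) measurable
  with pos show ?thesis by linarith
qed

end

theorem theorem1p3:
  fixes M :: "'a measure" and Y :: "nat \<Rightarrow> 'a \<Rightarrow> real" and a1 a2 :: real
  assumes "prob_space M"
    and "(a1, a2) \<in> regionC"
    and indep: "prob_space.indep_vars M (\<lambda>_. borel) Y {1..}"
    and ident: "\<And>n. n \<ge> 1 \<Longrightarrow> distr M borel (Y n) = distr M borel (Y 1)"
    and nondeg: "\<not> (\<exists>c. AE w in M. Y 1 w = c)"
    and neg: "measure M {w \<in> space M. Y 1 w < 0} > 0"
    and tail: "\<exists>\<alpha>>1. (\<lambda>x. measure M {w \<in> space M. Y 1 w \<ge> x})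
                        \<in> O[at_top](\<lambda>x. ln x powr (-\<alpha>))"
  shows "\<forall>x\<ge>0.
           (\<lambda>N. pN M a1 a2 Y N x) \<longlonglongrightarrow> measure M {w \<in> space M. \<forall>n\<ge>1. AR2 a1 a2 Y n w \<le> x}
         \<and> measure M {w \<in> space M. \<forall>n\<ge>1. AR2 a1 a2 Y n w \<le> x} > 0"
proof (intro allI impI conjI)
  interpret P: prob_space M by (rule assms(1))
  fix x :: real assume x: "0 \<le> x"
  obtain r1 r2 where r: "1 < r1" "-r1 \<le> r2" "r2 \<le> r1" "a1 = r1 + r2" "a2 = -(r1 * r2)"
    using regionC_roots[OF assms(2)] by blast
  have [measurable]: "Y k \<in> borel_measurable M" if "1 \<le> k" for k
    using indep that unfolding P.indep_vars_def2 by auto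
  have [measurable]: "(\<lambda>w. AR2 a1 a2 Y n w) \<in> borel_measurable M" for n
    unfolding AR2_moving_average[OF r(4,5)] by measurable
  show "(\<lambda>N. pN M a1 a2 Y N x) \<longlonglongrightarrow> measure M {w \<in> space M. \<forall>n\<ge>1. AR2 a1 a2 Y n w \<le> x}"
    unfolding pN_def by (intro P.prob_forall_ge1_limit) measurable
  obtain e where e: "0 < e" "measure M {w \<in> space M. Y 1 w \<le> -e} > 0"
    using P.prob_below_neg_level[of "Y 1"] neg by force
  obtain \<alpha> where \<alpha>: "1 < \<alpha>"
    and log_tail: "(\<lambda>x. measure M {w \<in> space M. Y 1 w \<ge> x}) \<in> O[at_top](\<lambda>x. ln x powr (-\<alpha>))"
    using tail by blast
  have "1 < sqrt r1" using r by simp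
  with log_tail \<alpha> have "summable (\<lambda>k. measure M {w \<in> space M. Y 1 w \<ge> sqrt r1 ^ k})"
    by (intro summable_at_geometric_if_log_tail)
  then have "0 < measure M {w \<in> space M. \<forall>n\<ge>1. AR2 a1 a2 Y n w \<le> 0}"
    by (intro P.AR2_never_positive_prob_pos[OF indep ident r(1,2,4,5) e])
  also have "\<dots> \<le> measure M {w \<in> space M. \<forall>n\<ge>1. AR2 a1 a2 Y n w \<le> x}"
  proof (rule P.finite_measure_mono)
    show "{w \<in> space M. \<forall>n\<ge>1. AR2 a1 a2 Y n w \<le> 0} \<subseteq> {w \<in> space M. \<forall>n\<ge>1. AR2 a1 a2 Y n w \<le> x}"
      using x by force
  qed measurable
  finally show "measure M {w \<in> space M. \<forall>n\<ge>1. AR2 a1 a2 Y n w \<le> x} > 0" .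
qed

end
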